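(* Let $\Lambda\subset\mathbb{R}^3$ be a closed set of Lebesgue measure zero and let $w\in C^\infty(\mathbb{R}^3\setminus\Lambda)$ be such that $e^w\in L_{1}(\mathbb{R}^3)$ and there exist $K>0$, $q>0$ with $K^{-1}d_0(y,\Lambda)^{-q}\leq e^{w(y)}\leq K d_0(y,\Lambda)^{-q}$ for all $y\in\mathbb{R}^3\setminus\Lambda$. Then for every $x\in\mathbb{R}^3\setminus\Lambda$, $$\big((-\Delta)^{1/2}w\big)(x)\geq e^{-w(x)}\big((-\Delta)^{1/2}e^w\big)(x).$$
   Context: $d_0$ is the Euclidean distance. For $0<\alpha<1$, $L_{2\alpha}(\mathbb{R}^3)=\{h:\int_{\mathbb{R}^3}\frac{|h(x)|}{1+|x|^{3+2\alpha}}dx<\infty\}$ (here $L_1$ means the case $\alpha=1/2$). The fractional Laplacian is $(-\Delta)^{\alpha}h(x)=-d_{3,\alpha}\int_{\mathbb{R}^3}\frac{h(x+y)+h(x-y)-2h(x)}{|y|^{3+2\alpha}}dy$ for $h\in L_{2\alpha}(\mathbb{R}^3)$, with $d_{3,\alpha}>0$ the normalizing constant making the Fourier symbol $|\xi|^{2\alpha}$. *)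

theory Defs
  imports "HOL-Analysis.Analysis"
begin

text \<open>C^k on a set U (intended for open U): continuous, and for k+1 the function is
  Frechet differentiable at every point of U with every directional derivative of class C^k.\<close>
fun Ck_on :: "nat \<Rightarrow> (real^3) set \<Rightarrow> (real^3 \<Rightarrow> real) \<Rightarrow> bool" where
  "Ck_on 0 U f = continuous_on U f"
| "Ck_on (Suc n) U f =
     (\<exists>f'. (\<forall>x\<in>U. (f has_derivative f' x) (at x)) \<and> (\<forall>v. Ck_on n U (\<lambda>x. f' x v)))"

definition smooth_on3 :: "(real^3) set \<Rightarrow> (real^3 \<Rightarrow> real) \<Rightarrow> bool" where
  "smooth_on3 U f \<longleftrightarrow> (\<forall>n. Ck_on n U f)"

definition L_weighted :: "real \<Rightarrow> (real^3 \<Rightarrow> real) \<Rightarrow> bool" where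
  "L_weighted a h \<longleftrightarrow>
     integrable lborel (\<lambda>x. \<bar>h x\<bar> / (1 + norm x powr (3 + a)))"

text \<open>Normalizing constant d_{3,alpha} for which the Fourier symbol is |xi|^{2 alpha}:
  d_{3,alpha} = 4^alpha Gamma(3/2+alpha) / (2 pi^(3/2) |Gamma(-alpha)|).\<close>
definition d3 :: "real \<Rightarrow> real" where
  "d3 a = 4 powr a * Gamma (3/2 + a) / (2 * pi powr (3/2) * \<bar>Gamma (- a)\<bar>)"

definition frac_lap :: "real \<Rightarrow> (real^3 \<Rightarrow> real) \<Rightarrow> real^3 \<Rightarrow> real" where
  "frac_lap a h x = - d3 a * (\<integral>y. (h (x + y) + h (x - y) - 2 * h x) / norm y powr (3 + 2 * a) \<partial>lborel)"

end

theory Submission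
  imports Defs "HOL-Real_Asymp.Real_Asymp"
begin

text \<open>With \<open>a = w(x+y) - w(x)\<close> and \<open>b = w(x-y) - w(x)\<close>, the inequality
  \<open>a + b \<le> exp a + exp b - 2\<close> says that the second difference of \<open>w\<close> at \<open>x\<close> is bounded
  pointwise by \<open>exp (- w x)\<close> times that of \<open>exp \<circ> w\<close>; integrating against \<open>|y|^-4\<close> gives the claim
  once both integrals exist as Lebesgue integrals. Near \<open>y = 0\<close>, Taylor's formula bounds both
  second differences by \<open>C |y|^2\<close>. Far away, integrability of \<open>exp w / (1 + |y|^4)\<close> bounds the
  second difference of \<open>exp \<circ> w\<close> from above, while \<open>exp w \<ge> d(y,\<Lambda>)^-q / K\<close> lets \<open>w\<close> decrease
  at most logarithmically, which bounds the second difference of \<open>w\<close> from below by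
  \<open>-C (1 + |y|^(1/2))\<close>. So both integrands are squeezed between integrable functions.\<close>

lemma nn_integral_abs_powr_Icc_finite:
  fixes R p :: real
  assumes "R \<ge> 0" and "p < 1"
  shows "(\<integral>\<^sup>+t. ennreal (\<bar>t\<bar> powr (- p) * indicator {-R..R} t) \<partial>lborel) < \<infinity>"
proof -
  obtain I where I: "((\<lambda>t::real. t powr (- p)) has_integral I) {0..R}"
    using integrable_on_powr_from_0[of "- p" R] assms by (auto simp: integrable_on_def)
  have right: "((\<lambda>t::real. \<bar>t\<bar> powr (- p)) has_integral I) {0..R}"
    using I by (rule has_integral_eq[rotated]) auto
  have left: "((\<lambda>t::real. \<bar>t\<bar> powr (- p)) has_integral I) {-R..0}"
    using has_integral_reflect_real[where f="\<lambda>t::real. \<bar>t\<bar> powr (- p)" and a=0 and b=R] right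
    by simp
  have "((\<lambda>t::real. \<bar>t\<bar> powr (- p)) has_integral (I + I)) {-R..R}"
    using has_integral_combine[OF _ _ left right] assms by simp
  then have "(\<integral>\<^sup>+t. ennreal (indicator {-R..R} t * \<bar>t\<bar> powr (- p)) \<partial>lborel) = ennreal (I + I)"
    by (intro nn_integral_has_integral_lebesgue) auto
  then show ?thesis by (simp add: mult.commute)
qed

lemma nn_integral_one_plus_abs_powr_finite:
  fixes p :: real
  assumes "p > 1"
  shows "(\<integral>\<^sup>+t. ennreal ((1 + \<bar>t\<bar>) powr (- p)) \<partial>lborel) < \<infinity>"
proof -
  define f where "f t = (1 + \<bar>t\<bar>) powr (- p)" for t :: real
  define F where "F t = (1 + t) powr (1 - p) / (1 - p)" for t :: real
  have [measurable]: "f \<in> borel_measurable borel" unfolding f_def by measurable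
  have "DERIV F t :> f t" if "0 \<le> t" for t
  proof -
    have "DERIV F t :> (1 - p) * (1 + t) powr (1 - p - 1) * 1 / (1 - p)"
      unfolding F_def using that assms by (auto intro!: derivative_eq_intros)
    then show ?thesis using that assms by (simp add: f_def)
  qed
  moreover have "(F \<longlongrightarrow> 0) at_top" unfolding F_def using assms by real_asymp
  ultimately have half: "(\<integral>\<^sup>+t. ennreal (f t) * indicator {0..} t \<partial>lborel) = 0 - F 0"
    by (intro nn_integral_FTC_atLeast) (auto simp: f_def)
  have "(\<integral>\<^sup>+t. ennreal (f t) * indicator {0..} (- t) \<partial>lborel)
      = (\<integral>\<^sup>+t. ennreal (f t) * indicator {0..} t \<partial>lborel)"
    using nn_integral_real_affine[of "\<lambda>t. ennreal (f t) * indicator {0..} t" "-1" 0]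
    by (simp add: f_def)
  moreover have "(\<integral>\<^sup>+t. ennreal (f t) \<partial>lborel)
      \<le> (\<integral>\<^sup>+t. ennreal (f t) * indicator {0..} t + ennreal (f t) * indicator {0..} (- t) \<partial>lborel)"
    by (intro nn_integral_mono) (auto split: split_indicator)
  ultimately show ?thesis
    using half by (subst (asm) nn_integral_add) (auto simp: f_def top.extremum_strict order.strict_trans1)
qed

lemma prod_Basis_powr:
  assumes "x > 0"
  shows "(\<Prod>b\<in>(Basis :: 'a::euclidean_space set). x powr (a / DIM('a))) = x powr a"
  using assms by (simp add: prod_constant powr_realpow[symmetric] powr_powr)

text \<open>Both integrability proofs reduce to one dimension: each coordinate satisfies
  \<open>\<bar>y \<bullet> b\<bar> \<le> norm y\<close>, so a power of \<open>norm y\<close> is dominated by a product of one-dimensional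
  functions of the coordinates, whose integral factorizes.\<close>

lemma integrable_norm_powr_cball:
  fixes r s :: real
  assumes "r > 0" and "0 \<le> s" and "s < DIM('a)"
  shows "integrable lborel (\<lambda>y::'a::euclidean_space. indicator (cball 0 r) y * norm y powr (- s))"
proof (rule integrableI_nonneg)
  define p where "p = s / DIM('a)"
  have p: "0 \<le> p" "p < 1" using assms by (auto simp: p_def)
  define \<phi> where "\<phi> t = (if t = 0 then \<infinity> else ennreal (\<bar>t\<bar> powr (- p))) * indicator {-r..r} t"
    for t :: real
  have [measurable]: "\<phi> \<in> borel_measurable borel" unfolding \<phi>_def by measurable
  have "(\<integral>\<^sup>+t. \<phi> t \<partial>lborel) = (\<integral>\<^sup>+t. ennreal (\<bar>t\<bar> powr (- p) * indicator {-r..r} t) \<partial>lborel)"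
    using AE_lborel_singleton[of "0::real"]
    by (intro nn_integral_cong_AE, eventually_elim) (auto simp: \<phi>_def ennreal_mult split: split_indicator)
  then have \<phi>_finite: "(\<integral>\<^sup>+t. \<phi> t \<partial>lborel) < \<infinity>"
    using nn_integral_abs_powr_Icc_finite[of r p] assms p by simp
  have bound: "ennreal (indicator (cball 0 r) y * norm y powr (- s)) \<le> (\<Prod>b\<in>Basis. \<phi> (y \<bullet> b))"
    for y :: 'a
  proof (cases "y \<in> cball 0 r")
    case True
    then have ind: "indicator {-r..r} (y \<bullet> b) = (1::ennreal)" if "b \<in> Basis" for b
      using Basis_le_norm[OF that, of y] by (auto simp: indicator_def abs_le_iff)
    show ?thesis
    proof (cases "\<exists>b\<in>Basis. y \<bullet> b = 0")
      case True
      then have "(\<Prod>b\<in>Basis. \<phi> (y \<bullet> b)) = \<infinity>"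
        using ind by (auto simp: \<phi>_def ennreal_prod_eq_top)
      then show ?thesis by simp
    next
      case False
      then have "y \<noteq> 0" by (metis inner_zero_left nonempty_Basis ex_in_conv)
      then have "norm y powr (- s) = (\<Prod>b\<in>(Basis :: 'a set). norm y powr (- p))"
        using prod_Basis_powr[of "norm y" "- s", where 'a='a] by (simp add: p_def)
      also have "\<dots> \<le> (\<Prod>b\<in>Basis. \<bar>y \<bullet> b\<bar> powr (- p))"
        using False p by (intro prod_mono conjI powr_mono2' Basis_le_norm) auto
      finally show ?thesis
        using False ind \<open>y \<in> cball 0 r\<close>
        by (auto simp: \<phi>_def prod_ennreal intro!: ennreal_leI)
    qed
  qed simp
  have "(\<integral>\<^sup>+y. ennreal (indicator (cball 0 r) y * norm (y::'a) powr (- s)) \<partial>lborel)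
      \<le> (\<integral>\<^sup>+y. (\<Prod>b\<in>Basis. \<phi> ((y::'a) \<bullet> b)) \<partial>lborel)"
    by (intro nn_integral_mono bound)
  also have "\<dots> = (\<integral>\<^sup>+t. \<phi> t \<partial>lborel) ^ DIM('a)"
    using nn_integral_lborel_prod[where f="\<lambda>_. \<phi>"] by (simp add: prod_constant)
  also have "\<dots> < \<infinity>" using \<phi>_finite by (simp add: power_less_top_ennreal)
  finally show "(\<integral>\<^sup>+y. ennreal (indicator (cball 0 r) y * norm (y::'a) powr (- s)) \<partial>lborel) < \<infinity>" .
qed (measurable, auto)

lemma integrable_norm_powr_outside_cball:
  fixes r s :: real
  assumes "r > 0" and "s > DIM('a)"
  shows "integrable lborel (\<lambda>y::'a::euclidean_space. indicator (- cball 0 r) y * norm y powr (- s))"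
proof (rule integrableI_nonneg)
  define p where "p = s / DIM('a)"
  have p: "p > 1" using assms by (auto simp: p_def)
  define \<phi> where "\<phi> t = ennreal ((1 + \<bar>t\<bar>) powr (- p))" for t :: real
  have [measurable]: "\<phi> \<in> borel_measurable borel" unfolding \<phi>_def by measurable
  define c where "c = ((1 + r) / r) powr s"
  have bound: "ennreal (indicator (- cball 0 r) y * norm y powr (- s)) \<le> ennreal c * (\<Prod>b\<in>Basis. \<phi> (y \<bullet> b))"
    for y :: 'a
  proof (cases "y \<in> cball 0 r")
    case False
    then have y: "norm y > r" by simp
    have "c * ((1 + r) / r) powr (- s) = 1"
      using assms by (simp add: c_def powr_minus)
    then have "norm y powr (- s) = c * (((1 + r) / r) * norm y) powr (- s)"
      using assms powr_mult[of "(1 + r) / r" "norm y" "- s"] by (simp add: mult.assoc[symmetric])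
    also have "\<dots> \<le> c * (1 + norm y) powr (- s)"
      using assms y by (intro mult_left_mono powr_mono2') (auto simp: c_def field_simps)
    also have "(1 + norm y) powr (- s) = (\<Prod>b\<in>(Basis :: 'a set). (1 + norm y) powr (- p))"
      using prod_Basis_powr[of "1 + norm y" "- s", where 'a='a]
      by (simp add: p_def add_pos_nonneg)
    also have "\<dots> \<le> (\<Prod>b\<in>Basis. (1 + \<bar>y \<bullet> b\<bar>) powr (- p))"
      using p by (intro prod_mono conjI powr_mono2' add_left_mono Basis_le_norm) auto
    finally have "norm y powr (- s) \<le> c * (\<Prod>b\<in>Basis. (1 + \<bar>y \<bullet> b\<bar>) powr (- p))"
      by (simp add: c_def mult_left_mono)
    then show ?thesis
      using False by (auto simp: \<phi>_def prod_ennreal ennreal_mult'[symmetric] c_def intro!: ennreal_leI)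
  qed simp
  have "(\<integral>\<^sup>+y. ennreal (indicator (- cball 0 r) y * norm (y::'a) powr (- s)) \<partial>lborel)
      \<le> (\<integral>\<^sup>+y. ennreal c * (\<Prod>b\<in>Basis. \<phi> ((y::'a) \<bullet> b)) \<partial>lborel)"
    by (intro nn_integral_mono bound)
  also have "\<dots> = ennreal c * (\<integral>\<^sup>+y. (\<Prod>b\<in>Basis. \<phi> ((y::'a) \<bullet> b)) \<partial>lborel)"
    by (rule nn_integral_cmult) auto
  also have "(\<integral>\<^sup>+y. (\<Prod>b\<in>Basis. \<phi> ((y::'a) \<bullet> b)) \<partial>lborel) = (\<integral>\<^sup>+t. \<phi> t \<partial>lborel) ^ DIM('a)"
    using nn_integral_lborel_prod[where f="\<lambda>_. \<phi>"] by (simp add: prod_constant)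
  also have "ennreal c * \<dots> < \<infinity>"
    using nn_integral_one_plus_abs_powr_finite[OF p]
    by (simp add: \<phi>_def power_less_top_ennreal ennreal_mult_less_top)
  finally show "(\<integral>\<^sup>+y. ennreal (indicator (- cball 0 r) y * norm (y::'a) powr (- s)) \<partial>lborel) < \<infinity>" .
qed (measurable, auto)

lemma lborel_eq_distr_affine:
  fixes t :: "'a::euclidean_space"
  assumes "\<bar>c\<bar> = 1"
  shows "lborel = distr lborel borel (\<lambda>y. t + c *\<^sub>R y)"
  using lborel_affine[of c t] assms by (auto simp: density_1)

lemma integrable_lborel_affine:
  fixes t :: "'a::euclidean_space" and f :: "'a \<Rightarrow> real"
  assumes "\<bar>c\<bar> = 1" and "integrable lborel f"
  shows "integrable lborel (\<lambda>y. f (t + c *\<^sub>R y))"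
proof -
  have "integrable (distr lborel borel (\<lambda>y. t + c *\<^sub>R y)) f"
    using assms lborel_eq_distr_affine[of c t] by simp
  then show ?thesis
    using assms(2) by (subst (asm) integrable_distr_eq) auto
qed

lemma AE_lborel_affine:
  fixes t :: "'a::euclidean_space"
  assumes "\<bar>c\<bar> = 1" and "Measurable.pred borel P" and "AE x in lborel. P x"
  shows "AE y in lborel. P (t + c *\<^sub>R y)"
proof -
  have "AE x in distr lborel borel (\<lambda>y. t + c *\<^sub>R y). P x"
    using assms(3) by (subst (asm) lborel_eq_distr_affine[OF assms(1), of t])
  then show ?thesis
    using assms(2) by (subst (asm) AE_distr_iff) auto
qed

definition second_diff :: "('a::real_vector \<Rightarrow> real) \<Rightarrow> 'a \<Rightarrow> 'a \<Rightarrow> real" where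
  "second_diff h x y = h (x + y) + h (x - y) - 2 * h x"

lemma linear_eq_sum_Basis:
  fixes f :: "'a::euclidean_space \<Rightarrow> real"
  assumes "linear f"
  shows "f y = (\<Sum>b\<in>Basis. (y \<bullet> b) * f b)"
  using Linear_Algebra.linear_componentwise[OF assms, of y 1] by simp

lemma abs_sum_Basis_le:
  fixes y :: "'a::euclidean_space"
  shows "\<bar>\<Sum>b\<in>Basis. (y \<bullet> b) * g b\<bar> \<le> norm y * (\<Sum>b\<in>Basis. \<bar>g b\<bar>)"
  by (rule order_trans[OF sum_abs])
     (auto simp: abs_mult sum_distrib_left intro!: sum_mono mult_right_mono Basis_le_norm)

lemma second_difference_Taylor_bounds:
  fixes f f' f'' :: "real \<Rightarrow> real"
  assumes f': "\<And>t. -1 \<le> t \<Longrightarrow> t \<le> 1 \<Longrightarrow> (f has_real_derivative f' t) (at t)"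
    and f'': "\<And>t. -1 \<le> t \<Longrightarrow> t \<le> 1 \<Longrightarrow> (f' has_real_derivative f'' t) (at t)"
    and M1: "\<And>t. -1 \<le> t \<Longrightarrow> t \<le> 1 \<Longrightarrow> \<bar>f' t\<bar> \<le> M1"
    and M2: "\<And>t. -1 \<le> t \<Longrightarrow> t \<le> 1 \<Longrightarrow> \<bar>f'' t\<bar> \<le> M2"
  shows "\<bar>f 1 - f 0\<bar> \<le> M1" "\<bar>f (-1) - f 0\<bar> \<le> M1" "\<bar>f 1 + f (-1) - 2 * f 0\<bar> \<le> M2"
proof -
  define diff where "diff m = (if m = 0 then f else if m = 1 then f' else f'')" for m :: nat
  have diff0: "diff 0 = f" by (simp add: diff_def)
  have derivs: "\<forall>m t. m < n \<and> -1 \<le> t \<and> t \<le> 1 \<longrightarrow> DERIV (diff m) t :> diff (Suc m) t"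
    if "n \<le> 2" for n
    using that f' f'' by (auto simp: diff_def less_Suc_eq)
  obtain t1 where "0 < t1" "t1 < 1" "f 1 = f 0 + f' t1"
    using Taylor[of 1 diff f "-1" 1 0 1, OF _ diff0 derivs] by (auto simp: diff_def)
  moreover obtain t2 where "-1 < t2" "t2 < 0" "f (-1) = f 0 - f' t2"
    using Taylor[of 1 diff f "-1" 1 0 "-1", OF _ diff0 derivs] by (auto simp: diff_def)
  moreover obtain t3 where "0 < t3" "t3 < 1" "f 1 = f 0 + f' 0 + f'' t3 / 2"
    using Taylor[of 2 diff f "-1" 1 0 1, OF _ diff0 derivs] by (auto simp: diff_def eval_nat_numeral)
  moreover obtain t4 where "-1 < t4" "t4 < 0" "f (-1) = f 0 - f' 0 + f'' t4 / 2"
    using Taylor[of 2 diff f "-1" 1 0 "-1", OF _ diff0 derivs] by (auto simp: diff_def eval_nat_numeral)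
  ultimately show "\<bar>f 1 - f 0\<bar> \<le> M1" "\<bar>f (-1) - f 0\<bar> \<le> M1" "\<bar>f 1 + f (-1) - 2 * f 0\<bar> \<le> M2"
    using M1[of t1] M1[of t2] M2[of t3] M2[of t4] by auto
qed

lemma Ck_on_2_bounded_derivatives:
  fixes w :: "real^3 \<Rightarrow> real"
  assumes "Ck_on 2 U w" and "compact S" and "S \<subseteq> U"
  obtains f' G M1 M2 where
    "\<And>z. z \<in> U \<Longrightarrow> (w has_derivative f' z) (at z)"
    "\<And>z b. z \<in> U \<Longrightarrow> ((\<lambda>z. f' z b) has_derivative G b z) (at z)"
    "\<And>z. z \<in> S \<Longrightarrow> (\<Sum>b\<in>Basis. \<bar>f' z b\<bar>) \<le> M1"
    "\<And>z. z \<in> S \<Longrightarrow> (\<Sum>b\<in>Basis. \<Sum>b'\<in>Basis. \<bar>G b z b'\<bar>) \<le> M2"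
proof -
  obtain f' where f': "\<And>z. z \<in> U \<Longrightarrow> (w has_derivative f' z) (at z)"
    and "\<And>v. Ck_on 1 U (\<lambda>z. f' z v)"
    using assms(1) by (auto simp: numeral_2_eq_2)
  then have "\<forall>v. \<exists>g. (\<forall>z\<in>U. ((\<lambda>z. f' z v) has_derivative g z) (at z)) \<and> (\<forall>u. continuous_on U (\<lambda>z. g z u))"
    by simp
  then obtain G where G: "\<And>v z. z \<in> U \<Longrightarrow> ((\<lambda>z. f' z v) has_derivative G v z) (at z)"
    and G_cont: "\<And>v u. continuous_on U (\<lambda>z. G v z u)"
    by metis
  have f'_cont: "continuous_on U (\<lambda>z. f' z v)" for v
    using G by (intro continuous_at_imp_continuous_on ballI has_derivative_continuous) blast
  have "continuous_on S (\<lambda>z. \<Sum>b\<in>Basis. \<bar>f' z b\<bar>)"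
    using f'_cont assms(3) by (intro continuous_intros) (auto intro: continuous_on_subset)
  from continuous_on_compact_bound[OF assms(2) this]
  obtain M1 where M1: "\<And>z. z \<in> S \<Longrightarrow> norm (\<Sum>b\<in>Basis. \<bar>f' z b\<bar>) \<le> M1" by blast
  have "continuous_on S (\<lambda>z. \<Sum>b\<in>Basis. \<Sum>b'\<in>Basis. \<bar>G b z b'\<bar>)"
    using G_cont assms(3) by (intro continuous_intros) (auto intro: continuous_on_subset)
  from continuous_on_compact_bound[OF assms(2) this]
  obtain M2 where M2: "\<And>z. z \<in> S \<Longrightarrow> norm (\<Sum>b\<in>Basis. \<Sum>b'\<in>Basis. \<bar>G b z b'\<bar>) \<le> M2" by blast
  show ?thesis
    by (rule that[OF f' G]) (use M1 M2 in \<open>auto dest: abs_le_D1\<close>)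
qed

lemma has_real_derivative_along_line:
  fixes g :: "'a::real_normed_vector \<Rightarrow> real"
  assumes "(g has_derivative D) (at (x + t *\<^sub>R y))"
  shows "((\<lambda>t. g (x + t *\<^sub>R y)) has_real_derivative D y) (at t)"
proof -
  have "((\<lambda>t. x + t *\<^sub>R y) has_derivative (\<lambda>h. h *\<^sub>R y)) (at t)"
    by (auto intro!: derivative_eq_intros)
  from has_derivative_compose[OF this assms] show ?thesis
    using has_derivative_linear[OF assms]
    by (simp add: has_field_derivative_def mult_commute_abs linear_scale)
qed

lemma Ck_on_2_second_difference_bounds:
  fixes w :: "real^3 \<Rightarrow> real"
  assumes "Ck_on 2 U w" and "cball x r \<subseteq> U"
  obtains C1 C2 where
    "\<And>y. norm y \<le> r \<Longrightarrow> \<bar>w (x + y) - w x\<bar> \<le> C1 * norm y"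
    "\<And>y. norm y \<le> r \<Longrightarrow> \<bar>w (x - y) - w x\<bar> \<le> C1 * norm y"
    "\<And>y. norm y \<le> r \<Longrightarrow> \<bar>second_diff w x y\<bar> \<le> C2 * (norm y)\<^sup>2"
proof -
  obtain f' G M1 M2 where f': "\<And>z. z \<in> U \<Longrightarrow> (w has_derivative f' z) (at z)"
    and G: "\<And>z b. z \<in> U \<Longrightarrow> ((\<lambda>z. f' z b) has_derivative G b z) (at z)"
    and M1: "\<And>z. z \<in> cball x r \<Longrightarrow> (\<Sum>b\<in>Basis. \<bar>f' z b\<bar>) \<le> M1"
    and M2: "\<And>z. z \<in> cball x r \<Longrightarrow> (\<Sum>b\<in>Basis. \<Sum>b'\<in>Basis. \<bar>G b z b'\<bar>) \<le> M2"
    using Ck_on_2_bounded_derivatives[OF assms(1) compact_cball assms(2)] by metis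
  have bounds: "\<bar>w (x + y) - w x\<bar> \<le> M1 * norm y \<and> \<bar>w (x - y) - w x\<bar> \<le> M1 * norm y
      \<and> \<bar>second_diff w x y\<bar> \<le> M2 * (norm y)\<^sup>2" if y: "norm y \<le> r" for y
  proof -
    define p where "p t = x + t *\<^sub>R y" for t :: real
    have p_ball: "p t \<in> cball x r" if "-1 \<le> t" "t \<le> 1" for t
      using y that mult_mono[of "\<bar>t\<bar>" 1 "norm y" r] by (auto simp: p_def dist_norm)
    then have p_U: "p t \<in> U" if "-1 \<le> t" "t \<le> 1" for t
      using that assms(2) by blast
    define \<phi>' where "\<phi>' t = (\<Sum>b\<in>Basis. (y \<bullet> b) * f' (p t) b)" for t
    define \<phi>'' where "\<phi>'' t = (\<Sum>b\<in>Basis. (y \<bullet> b) * G b (p t) y)" for t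
    have \<phi>'_eq: "\<phi>' t = f' (p t) y" and G_eq: "G b (p t) y = (\<Sum>b'\<in>Basis. (y \<bullet> b') * G b (p t) b')"
      if "-1 \<le> t" "t \<le> 1" for t b
      using linear_eq_sum_Basis has_derivative_linear f' G p_U[OF that] by (metis \<phi>'_def)+
    have d1: "((\<lambda>t. w (p t)) has_real_derivative \<phi>' t) (at t)" if "-1 \<le> t" "t \<le> 1" for t
      using has_real_derivative_along_line[OF f'[OF p_U[OF that], unfolded p_def]] \<phi>'_eq[OF that]
      by (simp add: p_def)
    have d2: "(\<phi>' has_real_derivative \<phi>'' t) (at t)" if "-1 \<le> t" "t \<le> 1" for t
      using has_real_derivative_along_line[OF G[OF p_U[OF that], unfolded p_def]]
      unfolding \<phi>'_def \<phi>''_def p_def by (auto intro!: derivative_eq_intros sum.cong)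
    have b1: "\<bar>\<phi>' t\<bar> \<le> M1 * norm y" if "-1 \<le> t" "t \<le> 1" for t
      using order_trans[OF abs_sum_Basis_le mult_left_mono[OF M1[OF p_ball[OF that]] norm_ge_zero]]
      by (simp add: \<phi>'_def mult.commute)
    have b2: "\<bar>\<phi>'' t\<bar> \<le> M2 * (norm y)\<^sup>2" if "-1 \<le> t" "t \<le> 1" for t
    proof -
      have "\<bar>\<phi>'' t\<bar> \<le> norm y * (\<Sum>b\<in>Basis. norm y * (\<Sum>b'\<in>Basis. \<bar>G b (p t) b'\<bar>))"
        unfolding \<phi>''_def G_eq[OF that]
        by (intro order_trans[OF abs_sum_Basis_le] mult_left_mono sum_mono abs_sum_Basis_le) auto
      also have "\<dots> \<le> (norm y)\<^sup>2 * M2"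
        using M2[OF p_ball[OF that]]
        by (simp add: power2_eq_square sum_distrib_left[symmetric] mult.assoc mult_left_mono)
      finally show ?thesis by (simp add: mult.commute)
    qed
    from second_difference_Taylor_bounds[OF d1 d2 b1 b2] show ?thesis
      by (simp add: p_def second_diff_def)
  qed
  show ?thesis
    by (rule that[of M1 M2]) (use bounds in blast)+
qed

lemma integral_mono_between:
  fixes f g L U :: "'a \<Rightarrow> real"
  assumes "integrable M L" "integrable M U"
    and "f \<in> borel_measurable M" "g \<in> borel_measurable M"
    and "AE y in M. L y \<le> f y" "\<And>y. f y \<le> g y" "\<And>y. g y \<le> U y"
  shows "integral\<^sup>L M f \<le> integral\<^sup>L M g"
proof -
  have "integrable M h" if "h \<in> borel_measurable M" "AE y in M. L y \<le> h y \<and> h y \<le> U y" for h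
  proof (rule Bochner_Integration.integrable_bound[where f="\<lambda>y. \<bar>L y\<bar> + \<bar>U y\<bar>"])
    show "AE y in M. norm (h y) \<le> norm (\<bar>L y\<bar> + \<bar>U y\<bar>)"
      using that(2) by eventually_elim auto
  qed (use assms(1,2) that(1) in auto)
  moreover have "AE y in M. L y \<le> f y \<and> f y \<le> U y" "AE y in M. L y \<le> g y \<and> g y \<le> U y"
    using assms(5) by (eventually_elim, meson assms(6,7) order_trans)+
  ultimately have "integrable M f" "integrable M g"
    using assms(3,4) by blast+
  then show ?thesis
    using assms(6) by (rule integral_mono)
qed

lemma exp_le_quadratic:
  fixes t D :: real
  assumes "\<bar>t\<bar> \<le> D"
  shows "exp t \<le> 1 + t + exp D * t\<^sup>2 / 2"
proof -
  obtain s where "\<bar>s\<bar> \<le> \<bar>t\<bar>" and exp_t: "exp t = (\<Sum>m<2. t ^ m / fact m) + exp s / fact 2 * t ^ 2"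
    using Maclaurin_exp_le[of t 2] by blast
  then have "exp s * t\<^sup>2 \<le> exp D * t\<^sup>2" using assms by (intro mult_right_mono) auto
  then show ?thesis using exp_t by (simp add: eval_nat_numeral)
qed

lemma second_diff_le_exp_second_diff:
  fixes w :: "'a::real_vector \<Rightarrow> real"
  shows "second_diff w x y \<le> exp (- w x) * second_diff (\<lambda>z. exp (w z)) x y"
proof -
  have "exp (- w x) * second_diff (\<lambda>z. exp (w z)) x y
      = exp (w (x + y) - w x) + exp (w (x - y) - w x) - 2"
    by (simp add: second_diff_def exp_diff exp_minus field_simps)
  then show ?thesis
    using exp_ge_add_one_self[of "w (x + y) - w x"] exp_ge_add_one_self[of "w (x - y) - w x"]
    unfolding second_diff_def by linarith
qed

lemma exp_second_diff_le:
  fixes w :: "'a::real_normed_vector \<Rightarrow> real"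
  assumes "\<bar>w (x + y) - w x\<bar> \<le> C1 * norm y" "\<bar>w (x - y) - w x\<bar> \<le> C1 * norm y"
    and "\<bar>second_diff w x y\<bar> \<le> C2 * (norm y)\<^sup>2" and "C1 * norm y \<le> D"
  shows "second_diff (\<lambda>z. exp (w z)) x y \<le> exp (w x) * (C2 + exp D * C1\<^sup>2) * (norm y)\<^sup>2"
proof -
  define \<alpha> where "\<alpha> = w (x + y) - w x"
  define \<beta> where "\<beta> = w (x - y) - w x"
  have sq: "t\<^sup>2 \<le> C1\<^sup>2 * (norm y)\<^sup>2" if "\<bar>t\<bar> \<le> C1 * norm y" for t
    using power_mono[OF that abs_ge_zero, of 2] by (simp add: power_mult_distrib)
  have "exp \<alpha> + exp \<beta> - 2 \<le> (\<alpha> + \<beta>) + exp D * (\<alpha>\<^sup>2 + \<beta>\<^sup>2) / 2"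
    using exp_le_quadratic[of \<alpha> D] exp_le_quadratic[of \<beta> D] assms(1,2,4)
    by (simp add: \<alpha>_def \<beta>_def add_divide_distrib distrib_left)
  also have "\<dots> \<le> C2 * (norm y)\<^sup>2 + exp D * (C1\<^sup>2 * (norm y)\<^sup>2)"
    using assms(3) sq[of \<alpha>] sq[of \<beta>] assms(1,2)
    by (intro add_mono) (auto simp: \<alpha>_def \<beta>_def second_diff_def)
  finally have "exp \<alpha> + exp \<beta> - 2 \<le> (C2 + exp D * C1\<^sup>2) * (norm y)\<^sup>2"
    by (simp add: algebra_simps)
  moreover have "second_diff (\<lambda>z. exp (w z)) x y = exp (w x) * (exp \<alpha> + exp \<beta> - 2)"
    by (simp add: second_diff_def \<alpha>_def \<beta>_def exp_diff field_simps)
  ultimately show ?thesis by (simp add: mult.assoc)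
qed

lemma second_diff_quotient_lower_bound:
  fixes w :: "real^3 \<Rightarrow> real"
  assumes "N \<in> null_sets lborel" and "r > 0"
    and near: "\<And>y. norm y \<le> r \<Longrightarrow> - (C * (norm y)\<^sup>2) \<le> second_diff w x y"
    and far: "\<And>y. x + y \<notin> N \<Longrightarrow> x - y \<notin> N \<Longrightarrow> - (a + b * sqrt (norm y)) \<le> second_diff w x y"
  obtains L where "integrable lborel L" "AE y in lborel. L y \<le> second_diff w x y / norm y powr 4"
proof
  let ?near = "\<lambda>s y. indicator (cball 0 r) y * norm y powr (- s) :: real"
  let ?far = "\<lambda>s y. indicator (- cball 0 r) y * norm y powr (- s) :: real"
  define L where "L y = - (C * ?near 2 y) - (a * ?far 4 y + b * ?far (7/2) y)" for y :: "real^3"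
  show "integrable lborel L"
    unfolding L_def using assms(2)
    by (intro integrable_norm_powr_cball integrable_norm_powr_outside_cball
        Bochner_Integration.integrable_diff Bochner_Integration.integrable_add
        integrable_mult_right integrable_minus) auto
  have [measurable]: "N \<in> sets borel" using assms(1) by auto
  have "Measurable.pred borel (\<lambda>z. z \<notin> N)" by measurable
  from AE_lborel_affine[OF _ this AE_not_in[OF assms(1)], of 1 x]
    AE_lborel_affine[OF _ this AE_not_in[OF assms(1)], of "-1" x]
  have "AE y in lborel. x + y \<notin> N" "AE y in lborel. x - y \<notin> N"
    by simp_all
  then show "AE y in lborel. L y \<le> second_diff w x y / norm y powr 4"
  proof eventually_elim
    case (elim y)
    show ?case
    proof (cases "norm y \<le> r")
      case True
      show ?thesis
      proof (cases "y = 0")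
        case False
        have "norm y powr (- 2) = (norm y)\<^sup>2 / norm y powr 4"
          using False powr_diff[of "norm y" 2 4] by (simp add: powr_realpow)
        moreover have "- (C * (norm y)\<^sup>2) / norm y powr 4 \<le> second_diff w x y / norm y powr 4"
          using near[OF True] by (intro divide_right_mono) auto
        ultimately show ?thesis
          using True by (simp add: L_def)
      qed (simp add: L_def)
    next
      case False
      then have y: "norm y > 0" using assms(2) by linarith
      have "norm y powr (- (7/2)) = sqrt (norm y) / norm y powr 4"
        using y powr_diff[of "norm y" "1/2" 4] by (simp add: powr_half_sqrt)
      moreover have "norm y powr (- 4) = 1 / norm y powr 4"
        by (simp add: powr_minus_divide)
      moreover have "- (a + b * sqrt (norm y)) / norm y powr 4 \<le> second_diff w x y / norm y powr 4"
        using far elim by (intro divide_right_mono) auto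
      ultimately show ?thesis
        using False by (simp add: L_def add_divide_distrib diff_divide_distrib)

    qed
  qed
qed

lemma one_plus_norm_pow4_le:
  fixes x y z :: "'a::real_normed_vector"
  assumes "0 < r" "r < norm y" and "norm z \<le> norm x + norm y"
  shows "1 + norm z ^ 4 \<le> (1 / r ^ 4 + (norm x / r + 1) ^ 4) * norm y ^ 4"
proof -
  have "1 \<le> (norm y / r) ^ 4"
    using assms by (intro one_le_power) auto
  then have "1 \<le> 1 / r ^ 4 * norm y ^ 4"
    by (simp add: power_divide)
  moreover have "norm z \<le> (norm x / r + 1) * norm y"
    using assms mult_left_mono[of r "norm y" "norm x"] mult_left_mono[OF assms(3), of r]
    by (simp add: field_simps)
  then have "norm z ^ 4 \<le> (norm x / r + 1) ^ 4 * norm y ^ 4"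
    unfolding power_mult_distrib[symmetric] by (intro power_mono) auto
  ultimately show ?thesis
    unfolding distrib_right by linarith
qed

lemma second_diff_quotient_upper_bound:
  fixes f :: "real^3 \<Rightarrow> real"
  assumes "L_weighted 1 f" and "\<And>z. 0 \<le> f z" and "r > 0"
    and near: "\<And>y. norm y \<le> r \<Longrightarrow> second_diff f x y \<le> C * (norm y)\<^sup>2"
  obtains U where "integrable lborel U" "\<And>y. second_diff f x y / norm y powr 4 \<le> U y"
proof
  define E where "E z = f z / (1 + norm z powr 4)" for z :: "real^3"
  define k where "k = 1 / r ^ 4 + (norm x / r + 1) ^ 4"
  define U where "U y = C * (indicator (cball 0 r) y * norm y powr (- 2))
    + k * (indicator (- cball 0 r) y * (E (x + y) + E (x - y)))" for y :: "real^3"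
  have "integrable lborel E"
    using assms(1,2) by (simp add: L_weighted_def E_def[abs_def])
  then have "integrable lborel (\<lambda>y. E (x + c *\<^sub>R y))" if "\<bar>c\<bar> = 1" for c
    by (rule integrable_lborel_affine[OF that])
  from this[of 1] this[of "-1"]
  have "integrable lborel (\<lambda>y. indicator (- cball 0 r) y * (E (x + y) + E (x - y)))"
    using integrable_mult_indicator[of "- cball 0 r" lborel "\<lambda>y. E (x + y) + E (x - y)"] by auto
  then show "integrable lborel U"
    unfolding U_def using assms(3)
    by (intro integrable_norm_powr_cball Bochner_Integration.integrable_add integrable_mult_right) auto
  show "second_diff f x y / norm y powr 4 \<le> U y" for y
  proof (cases "norm y \<le> r")
    case True
    show ?thesis
    proof (cases "y = 0")
      case False
      have "norm y powr (- 2) = (norm y)\<^sup>2 / norm y powr 4"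
        using False powr_diff[of "norm y" 2 4] by (simp add: powr_realpow)
      then show ?thesis
        using True near[OF True] by (simp add: U_def divide_right_mono)
    qed (use assms(3) in \<open>simp add: U_def\<close>)
  next
    case False
    then have y: "norm y > 0" using assms(3) by linarith
    have weight: "f z / norm y powr 4 \<le> k * E z" if "norm z \<le> norm x + norm y" for z
    proof -
      have "1 + norm z ^ 4 \<le> k * norm y ^ 4"
        unfolding k_def using assms(3) False that by (intro one_plus_norm_pow4_le) auto
      then have "f z * (1 + norm z ^ 4) \<le> f z * (k * norm y ^ 4)"
        using assms(2)[of z] by (rule mult_left_mono)
      then show ?thesis
        using y by (simp add: E_def powr_realpow' field_simps add_pos_nonneg)
    qed
    have "second_diff f x y / norm y powr 4 \<le> f (x + y) / norm y powr 4 + f (x - y) / norm y powr 4"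
      using assms(2)[of x] by (simp add: second_diff_def divide_right_mono add_divide_distrib[symmetric])
    also have "\<dots> \<le> k * E (x + y) + k * E (x - y)"
      using weight[of "x + y"] weight[of "x - y"] norm_triangle_ineq[of x y] norm_triangle_ineq4[of x y]
      by simp
    finally show ?thesis
      using False by (simp add: U_def distrib_left)
  qed
qed

lemma borel_measurable_L_weighted_exp:
  fixes w :: "real^3 \<Rightarrow> real"
  assumes "L_weighted a (\<lambda>y. exp (w y))"
  shows "w \<in> borel_measurable borel"
proof -
  define E where "E y = exp (w y) / (1 + norm y powr (3 + a))" for y :: "real^3"
  have [measurable]: "E \<in> borel_measurable borel"
    using borel_measurable_integrable[OF assms[unfolded L_weighted_def]] by (simp add: E_def[abs_def])
  have "1 + norm y powr (3 + a) \<noteq> 0" for y :: "real^3"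
    using powr_ge_zero[of "norm y" "3 + a"] by linarith
  then have "w = (\<lambda>y. ln (E y * (1 + norm y powr (3 + a))))"
    by (simp add: E_def fun_eq_iff)
  also have "\<dots> \<in> borel_measurable borel" by measurable
  finally show ?thesis .
qed

lemma ln_le_two_sqrt:
  assumes "t > 0"
  shows "ln t \<le> 2 * sqrt t"
proof -
  have "ln t = 2 * ln (sqrt t)" using assms by (simp add: ln_sqrt)
  also have "ln (sqrt t) \<le> sqrt t - 1" using assms by (intro ln_le_minus_one) auto
  finally show ?thesis by simp
qed

lemma lower_bound_of_exp_ge_infdist_powr:
  fixes w :: "'a::real_normed_vector \<Rightarrow> real"
  assumes "closed S" "a \<in> S" "K > 0" "q \<ge> 0"
    and exp_w: "inverse K * infdist z S powr (- q) \<le> exp (w z)" and "z \<notin> S"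
  shows "- (ln K + 2 * q * sqrt (norm a + 1)) - 2 * q * sqrt (norm z) \<le> w z"
proof -
  have d: "infdist z S > 0"
    using assms(1,2,6) by (intro infdist_pos_not_in_closed) auto
  have "- ln K - q * ln (infdist z S) = ln (inverse K * infdist z S powr (- q))"
    using d assms(3) by (simp add: ln_mult ln_inverse ln_powr)
  also have "\<dots> \<le> ln (exp (w z))"
    using exp_w d assms(3) by (subst ln_le_cancel_iff) auto
  finally have w_ge: "- ln K - q * ln (infdist z S) \<le> w z" by simp
  have "infdist z S \<le> norm z + (norm a + 1)"
    using infdist_le[OF assms(2), of z] norm_triangle_ineq4[of z a] by (simp add: dist_norm)
  then have "ln (infdist z S) \<le> ln (norm z + (norm a + 1))"
    using d by simp
  also have "\<dots> \<le> 2 * sqrt (norm z + (norm a + 1))"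
    by (intro ln_le_two_sqrt add_nonneg_pos) auto
  also have "\<dots> \<le> 2 * (sqrt (norm z) + sqrt (norm a + 1))"
    using sqrt_add_le_add_sqrt[of "norm z" "norm a + 1"] by simp
  finally have "q * ln (infdist z S) \<le> q * (2 * (sqrt (norm z) + sqrt (norm a + 1)))"
    using assms(4) by (intro mult_left_mono)
  then show ?thesis
    using w_ge by (simp add: algebra_simps)
qed

lemma second_diff_lower_bound_of_sqrt_growth:
  fixes w :: "'a::real_normed_vector \<Rightarrow> real"
  assumes "\<And>z. z \<notin> S \<Longrightarrow> - A - B * sqrt (norm z) \<le> w z" "B \<ge> 0"
    and "x + y \<notin> S" "x - y \<notin> S"
  shows "- ((2 * A + 2 * B * sqrt (norm x) + 2 * w x) + 2 * B * sqrt (norm y)) \<le> second_diff w x y"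
proof -
  have "sqrt (norm z) \<le> sqrt (norm x) + sqrt (norm y)" if "norm z \<le> norm x + norm y" for z :: 'a
    using order_trans[OF real_sqrt_le_mono[OF that] sqrt_add_le_add_sqrt] by simp
  then have sqrt_le: "B * sqrt (norm z) \<le> B * (sqrt (norm x) + sqrt (norm y))"
    if "norm z \<le> norm x + norm y" for z :: 'a
    using that assms(2) by (intro mult_left_mono) auto
  show ?thesis
    using assms(1)[OF assms(3)] assms(1)[OF assms(4)] sqrt_le[of "x + y"] sqrt_le[of "x - y"]
      norm_triangle_ineq[of x y] norm_triangle_ineq4[of x y]
    by (simp add: second_diff_def algebra_simps)
qed

lemma frac_lap_eq_second_diff:
  "frac_lap a h x = - d3 a * (\<integral>y. second_diff h x y / norm y powr (3 + 2 * a) \<partial>lborel)"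
  by (simp add: frac_lap_def second_diff_def)

lemma d3_nonneg:
  assumes "a \<ge> 0"
  shows "d3 a \<ge> 0"
  unfolding d3_def using assms
  by (intro divide_nonneg_nonneg mult_nonneg_nonneg) (auto intro: less_imp_le Gamma_real_pos)

lemma frac_lap_half_le_of_integrable_bounds:
  fixes w :: "real^3 \<Rightarrow> real"
  assumes [measurable]: "w \<in> borel_measurable borel"
    and "integrable lborel L" "AE y in lborel. L y \<le> second_diff w x y / norm y powr 4"
    and "integrable lborel U" "\<And>y. second_diff (\<lambda>z. exp (w z)) x y / norm y powr 4 \<le> U y"
  shows "exp (- w x) * frac_lap (1/2) (\<lambda>y. exp (w y)) x \<le> frac_lap (1/2) w x"
proof -
  have "(\<integral>y. second_diff w x y / norm y powr 4 \<partial>lborel)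
      \<le> (\<integral>y. exp (- w x) * (second_diff (\<lambda>z. exp (w z)) x y / norm y powr 4) \<partial>lborel)"
  proof (rule integral_mono_between[OF assms(2) integrable_mult_right[OF assms(4)] _ _ assms(3)])
    show "second_diff w x y / norm y powr 4
        \<le> exp (- w x) * (second_diff (\<lambda>z. exp (w z)) x y / norm y powr 4)" for y
      using second_diff_le_exp_second_diff[of w x y] by (simp add: divide_right_mono)
    show "exp (- w x) * (second_diff (\<lambda>z. exp (w z)) x y / norm y powr 4) \<le> exp (- w x) * U y" for y
      using assms(5) by (intro mult_left_mono) auto
  qed (simp_all add: second_diff_def)
  from mult_left_mono[OF this[unfolded integral_mult_right_zero] d3_nonneg[of "1/2"]]
  show ?thesis
    by (simp add: frac_lap_eq_second_diff mult.left_commute)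
qed

theorem proposition5p1:
  fixes \<Lambda> :: "(real^3) set" and w :: "real^3 \<Rightarrow> real" and K q :: real
  assumes "closed \<Lambda>"
    and "\<Lambda> \<in> null_sets lborel"
    and "smooth_on3 (- \<Lambda>) w"
    and "L_weighted 1 (\<lambda>y. exp (w y))"
    and "K > 0" and "q > 0"
    and "\<forall>y\<in>- \<Lambda>. inverse K * infdist y \<Lambda> powr (- q) \<le> exp (w y)
                     \<and> exp (w y) \<le> K * infdist y \<Lambda> powr (- q)"
  shows "\<forall>x\<in>- \<Lambda>. frac_lap (1/2) w x \<ge> exp (- w x) * frac_lap (1/2) (\<lambda>y. exp (w y)) x"
proof
  fix x assume x: "x \<in> - \<Lambda>"
  obtain a where a: "a \<in> \<Lambda>"
    using assms(7) x by (cases "\<Lambda> = {}") (auto simp: infdist_def)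
  obtain r where r: "r > 0" "cball x r \<subseteq> - \<Lambda>"
    using open_contains_cball assms(1) x by (metis open_Compl)
  obtain C1 C2 where C1: "\<And>y. norm y \<le> r \<Longrightarrow> \<bar>w (x + y) - w x\<bar> \<le> C1 * norm y"
      "\<And>y. norm y \<le> r \<Longrightarrow> \<bar>w (x - y) - w x\<bar> \<le> C1 * norm y"
    and C2: "\<And>y. norm y \<le> r \<Longrightarrow> \<bar>second_diff w x y\<bar> \<le> C2 * (norm y)\<^sup>2"
    using Ck_on_2_second_difference_bounds[OF _ r(2)] assms(3) unfolding smooth_on3_def by metis
  have near: "- (C2 * (norm y)\<^sup>2) \<le> second_diff w x y" if "norm y \<le> r" for y
    using C2[OF that] by linarith
  have far: "- ((2 * (ln K + 2 * q * sqrt (norm a + 1)) + 2 * (2 * q) * sqrt (norm x) + 2 * w x)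
      + 2 * (2 * q) * sqrt (norm y)) \<le> second_diff w x y" if "x + y \<notin> \<Lambda>" "x - y \<notin> \<Lambda>" for y
    using that assms(1,5,6,7) a
    by (intro second_diff_lower_bound_of_sqrt_growth lower_bound_of_exp_ge_infdist_powr) auto
  obtain L where L: "integrable lborel L" "AE y in lborel. L y \<le> second_diff w x y / norm y powr 4"
    using second_diff_quotient_lower_bound[OF assms(2) r(1) near far] by blast
  have "second_diff (\<lambda>z. exp (w z)) x y \<le> exp (w x) * (C2 + exp (\<bar>C1\<bar> * r) * C1\<^sup>2) * (norm y)\<^sup>2"
    if "norm y \<le> r" for y
    using that C1 C2 by (intro exp_second_diff_le) (auto intro: mult_mono)
  then obtain U where U: "integrable lborel U"
      "\<And>y. second_diff (\<lambda>z. exp (w z)) x y / norm y powr 4 \<le> U y"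
    using second_diff_quotient_upper_bound[OF assms(4) _ r(1)] by (metis exp_ge_zero)
  show "exp (- w x) * frac_lap (1/2) (\<lambda>y. exp (w y)) x \<le> frac_lap (1/2) w x"
    using borel_measurable_L_weighted_exp[OF assms(4)] L U
    by (rule frac_lap_half_le_of_integrable_bounds)
qed

end
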